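(* Assume Condition (C) and $\lambda/2<h<\lambda$. If $\eta\in\mathcal X$ contains a pair of nearest-neighbour sites $i,j\in\Lambda$ with $\eta(i)=+1$, $\eta(j)=-1$, then there is a downhill path (one along which $H$ is non-increasing) from $\eta$ to a configuration $\eta'$ with $H(\eta')<H(\eta)$; in particular $V_\eta=0$.
   Context: Let $\Lambda=\{1,\dots,L\}^2$, $\mathcal X=\{-1,0,+1\}^\Lambda$, $\partial^-\Lambda$ the sites of $\Lambda$ with a nearest neighbour outside $\Lambda$. Hamiltonian: $H(\eta)=\frac J2\sum_{i,j\in\Lambda,|i-j|=1}[\eta(i)-\eta(j)]^2+J\sum_{i\in\partial^-\Lambda}\sum_{j\notin\Lambda,|i-j|=1}\eta(i)^2-\lambda\sum_{i}\eta(i)^2-h\sum_i\eta(i)$. Condition (C): $J$ sufficiently large compared to $\lambda,h>0$; $L>(2J/(\lambda-h))^3$; none of $\tfrac{2J}{\lambda+h},\tfrac{2J}{\lambda-h},\tfrac{2J+\lambda-h}{\lambda+h},\tfrac{J+\lambda+h}{h}$ is an integer. A path is a sequence of configurations with consecutive ones differing at exactly one site. $V_\eta=\Phi(\eta,\{\zeta:H(\zeta)<H(\eta)\})-H(\eta)$ where $\Phi(\eta,A)$ is the minimal over paths from $\eta$ to $A$ of the maximum of $H$ along the path. *)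

theory Defs
  imports Complex_Main
begin

type_synonym site = "int \<times> int"
type_synonym config = "site \<Rightarrow> int"

definition box :: "nat \<Rightarrow> site set" where
  "box L = {1..int L} \<times> {1..int L}"

definition nn :: "site \<Rightarrow> site \<Rightarrow> bool" where
  "nn i j \<longleftrightarrow> \<bar>fst i - fst j\<bar> + \<bar>snd i - snd j\<bar> = 1"

definition nbrs :: "site \<Rightarrow> site set" where
  "nbrs i = {j. nn i j}"

definition inner_boundary :: "nat \<Rightarrow> site set" where
  "inner_boundary L = {i \<in> box L. \<exists>j. nn i j \<and> j \<notin> box L}"

definition configs :: "nat \<Rightarrow> config set" where
  "configs L = {\<eta>. (\<forall>i \<in> box L. \<eta> i \<in> {-1,0,1}) \<and> (\<forall>i. i \<notin> box L \<longrightarrow> \<eta> i = 0)}"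

definition Ham :: "nat \<Rightarrow> real \<Rightarrow> real \<Rightarrow> real \<Rightarrow> config \<Rightarrow> real" where
  "Ham L J lam h \<eta> =
     J / 2 * (\<Sum>i\<in>box L. \<Sum>j\<in>box L \<inter> nbrs i. (real_of_int (\<eta> i - \<eta> j))^2)
   + J * (\<Sum>i\<in>inner_boundary L. \<Sum>j\<in>nbrs i - box L. (real_of_int (\<eta> i))^2)
   - lam * (\<Sum>i\<in>box L. (real_of_int (\<eta> i))^2)
   - h * (\<Sum>i\<in>box L. real_of_int (\<eta> i))"

definition is_path :: "nat \<Rightarrow> config list \<Rightarrow> bool" where
  "is_path L p \<longleftrightarrow> p \<noteq> [] \<and> set p \<subseteq> configs L \<and>
     (\<forall>k. Suc k < length p \<longrightarrow> (\<exists>!i. (p ! k) i \<noteq> (p ! Suc k) i))"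

definition downhill :: "nat \<Rightarrow> real \<Rightarrow> real \<Rightarrow> real \<Rightarrow> config list \<Rightarrow> bool" where
  "downhill L J lam h p \<longleftrightarrow>
     (\<forall>k. Suc k < length p \<longrightarrow> Ham L J lam h (p ! Suc k) \<le> Ham L J lam h (p ! k))"

definition Phi :: "nat \<Rightarrow> real \<Rightarrow> real \<Rightarrow> real \<Rightarrow> config \<Rightarrow> config set \<Rightarrow> real" where
  "Phi L J lam h \<eta> A = Inf {Max (Ham L J lam h ` set p) | p.
       is_path L p \<and> hd p = \<eta> \<and> last p \<in> A}"

definition stab :: "nat \<Rightarrow> real \<Rightarrow> real \<Rightarrow> real \<Rightarrow> config \<Rightarrow> real" where
  "stab L J lam h \<eta> =
     Phi L J lam h \<eta> {\<zeta> \<in> configs L. Ham L J lam h \<zeta> < Ham L J lam h \<eta>} - Ham L J lam h \<eta>"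

end

theory Submission
  imports Defs
begin

text \<open>Take a nearest-neighbour pair \<open>i, j\<close> with \<open>\<eta> i = 1\<close>, \<open>\<eta> j = -1\<close> that is extremal in the
  direction perpendicular to the bond, and translate the bond one step in that direction to
  \<open>i', j'\<close>. By extremality, \<open>\<eta> i' \<noteq> 1\<close> or \<open>\<eta> j' \<noteq> -1\<close>. Setting the spin \<open>s = \<eta> k\<close> at
  \<open>k = i\<close> (resp. \<open>k = j\<close>) to 0 changes \<open>H\<close> by
  \<open>J \<Sum>\<^sub>m (2 s \<eta> m - 1) + \<lambda> + s h\<close>; the opposite spin contributes \<open>-3\<close>, the neighbour
  \<open>i'\<close> (resp. \<open>j'\<close>) at most \<open>-1\<close> and the other two at most \<open>1\<close>, so the change is at most
  \<open>-2J + \<lambda> + h \<le> -J < 0\<close> for \<open>J \<ge> \<lambda> + h\<close>. This single flip is a downhill path to a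
  lower energy, hence \<open>V\<^sub>\<eta> = 0\<close>.\<close>

lemma sum_fun_upd_diff:
  assumes "finite A" and "k \<in> A"
  shows "(\<Sum>i\<in>A. F i ((g(k:=c)) i)) - (\<Sum>i\<in>A. F i (g i)) = F k c - (F k (g k) :: real)"
proof -
  have "(\<Sum>i\<in>A. F i ((g(k:=c)) i)) = F k c + (\<Sum>i\<in>A - {k}. F i (g i))"
    using assms by (simp add: sum.remove)
  moreover have "(\<Sum>i\<in>A. F i (g i)) = F k (g k) + (\<Sum>i\<in>A - {k}. F i (g i))"
    using assms by (simp add: sum.remove)
  ultimately show ?thesis by simp
qed

lemma sum_sum_sq_diff_fun_upd:
  fixes g :: "'a \<Rightarrow> real"
  assumes fin: "finite A" and kA: "k \<in> A"
    and sym: "\<And>i j. j \<in> N i \<longleftrightarrow> i \<in> N j" and irrefl: "\<And>i. i \<notin> N i"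
  shows "(\<Sum>i\<in>A. \<Sum>j\<in>A \<inter> N i. ((g(k:=c)) i - (g(k:=c)) j)^2)
       - (\<Sum>i\<in>A. \<Sum>j\<in>A \<inter> N i. (g i - g j)^2)
       = 2 * (\<Sum>j\<in>A \<inter> N k. (c - g j)^2 - (g k - g j)^2)"
proof -
  define d where "d i j = ((g(k:=c)) i - (g(k:=c)) j)^2 - (g i - g j)^2" for i j
  have d_sym: "d i j = d j i" for i j by (simp add: d_def power2_commute)
  have d_row: "d k j = (c - g j)^2 - (g k - g j)^2" if "j \<in> N k" for j
    using that irrefl by (auto simp: d_def)
  \<comment> \<open>only bonds touching \<open>k\<close> change, and each of them is counted once from either end\<close>
  have split: "d i j = (if i = k then d k j else 0) + (if j = k then d i k else 0)"
    if "j \<in> N i" for i j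
    using that irrefl by (auto simp: d_def)
  have rows: "(\<Sum>i\<in>A. \<Sum>j\<in>A \<inter> N i. if i = k then d k j else 0) = (\<Sum>j\<in>A \<inter> N k. d k j)"
  proof -
    have "(\<Sum>i\<in>A. \<Sum>j\<in>A \<inter> N i. if i = k then d k j else 0)
        = (\<Sum>i\<in>A. if i = k then (\<Sum>j\<in>A \<inter> N k. d k j) else 0)"
      by (intro sum.cong refl) auto
    then show ?thesis using fin kA by simp
  qed
  have cols: "(\<Sum>i\<in>A. \<Sum>j\<in>A \<inter> N i. if j = k then d i k else 0) = (\<Sum>j\<in>A \<inter> N k. d k j)"
  proof -
    have "(\<Sum>i\<in>A. \<Sum>j\<in>A \<inter> N i. if j = k then d i k else 0) = (\<Sum>i\<in>A. if k \<in> N i then d i k else 0)"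
      using fin kA by (intro sum.cong refl) (simp add: sum.delta)
    also have "\<dots> = (\<Sum>i\<in>A \<inter> N k. d k i)"
      using fin sym by (simp add: sum.inter_filter[symmetric] d_sym Int_def)
    finally show ?thesis .
  qed
  have "(\<Sum>i\<in>A. \<Sum>j\<in>A \<inter> N i. ((g(k:=c)) i - (g(k:=c)) j)^2)
       - (\<Sum>i\<in>A. \<Sum>j\<in>A \<inter> N i. (g i - g j)^2) = (\<Sum>i\<in>A. \<Sum>j\<in>A \<inter> N i. d i j)"
    by (simp add: d_def sum_subtractf)
  also have "\<dots> = (\<Sum>i\<in>A. \<Sum>j\<in>A \<inter> N i. (if i = k then d k j else 0) + (if j = k then d i k else 0))"
    using split by (intro sum.cong refl) auto
  also have "\<dots> = 2 * (\<Sum>j\<in>A \<inter> N k. d k j)"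
    by (simp only: sum.distrib rows cols mult_2)
  also have "\<dots> = 2 * (\<Sum>j\<in>A \<inter> N k. (c - g j)^2 - (g k - g j)^2)"
    using d_row by simp
  finally show ?thesis .
qed

lemma finite_box: "finite (box L)"
  unfolding box_def by simp

lemma nn_sym: "nn i j \<longleftrightarrow> nn j i"
  unfolding nn_def by arith

lemma nn_irrefl: "\<not> nn i i"
  unfolding nn_def by simp

lemma nbrs_eq: "nbrs (a, b) = {(a + 1, b), (a - 1, b), (a, b + 1), (a, b - 1)}"
  by (auto simp: nbrs_def nn_def abs_if split: if_splits)

lemma finite_nbrs: "finite (nbrs i)"
  by (cases i) (simp add: nbrs_eq)

lemma card_nbrs: "card (nbrs i) = 4"
  by (cases i) (simp add: nbrs_eq)

lemma configs_outside: "\<eta> \<in> configs L \<Longrightarrow> i \<notin> box L \<Longrightarrow> \<eta> i = 0"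
  unfolding configs_def by (cases i) auto

lemma configs_range: "\<eta> \<in> configs L \<Longrightarrow> \<eta> i \<in> {-1, 0, 1}"
  unfolding configs_def by (cases "i \<in> box L"; cases i) auto

lemma configs_fun_upd: "\<eta> \<in> configs L \<Longrightarrow> k \<in> box L \<Longrightarrow> b \<in> {-1, 0, 1} \<Longrightarrow> \<eta>(k := b) \<in> configs L"
  unfolding configs_def by auto

lemma sum_inner_boundary_fun_upd:
  assumes "k \<in> box L"
  shows "(\<Sum>i\<in>inner_boundary L. \<Sum>j\<in>nbrs i - box L. F ((g(k:=c)) i))
       - (\<Sum>i\<in>inner_boundary L. \<Sum>j\<in>nbrs i - box L. F (g i))
       = (\<Sum>j\<in>nbrs k - box L. F c - (F (g k) :: real))"
proof (cases "k \<in> inner_boundary L")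
  case True
  have "finite (inner_boundary L)"
    using finite_box by (rule finite_subset[rotated]) (auto simp: inner_boundary_def)
  with True show ?thesis
    using sum_fun_upd_diff[where F = "\<lambda>i x. \<Sum>j\<in>nbrs i - box L. F x"]
    by (simp add: sum_subtractf right_diff_distrib)
next
  case False
  then have no_outer: "nbrs k - box L = {}"
    using assms by (auto simp: inner_boundary_def nbrs_def)
  have "(\<Sum>i\<in>inner_boundary L. \<Sum>j\<in>nbrs i - box L. F ((g(k:=c)) i))
       = (\<Sum>i\<in>inner_boundary L. \<Sum>j\<in>nbrs i - box L. F (g i))"
    using False by (intro sum.cong refl) auto
  then show ?thesis unfolding no_outer by simp
qed

lemma sum_nbrs_split_box:
  assumes "\<eta> \<in> configs L"
  shows "(\<Sum>m\<in>nbrs k. F (real_of_int (\<eta> m)))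
       = (\<Sum>m\<in>box L \<inter> nbrs k. F (real_of_int (\<eta> m))) + (\<Sum>m\<in>nbrs k - box L. F 0 :: real)"
proof -
  have "(\<Sum>m\<in>nbrs k - box L. F (real_of_int (\<eta> m))) = (\<Sum>m\<in>nbrs k - box L. F 0)"
    using assms by (intro sum.cong refl) (auto simp: configs_outside)
  moreover have "(\<Sum>m\<in>nbrs k. F (real_of_int (\<eta> m)))
      = (\<Sum>m\<in>nbrs k \<inter> box L. F (real_of_int (\<eta> m))) + (\<Sum>m\<in>nbrs k - box L. F (real_of_int (\<eta> m)))"
    by (rule sum.Int_Diff[OF finite_nbrs])
  ultimately show ?thesis by (simp only: Int_commute)
qed

text \<open>The boundary term of \<open>H\<close> is exactly the bond energy with the zero spins outside the box,
  so the energy change of a single spin update only involves its four neighbours.\<close>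
lemma Ham_fun_upd:
  assumes cf: "\<eta> \<in> configs L" and kb: "k \<in> box L"
  shows "Ham L J lam h (\<eta>(k:=b)) - Ham L J lam h \<eta> =
     J * (\<Sum>m\<in>nbrs k. (real_of_int b - real_of_int (\<eta> m))^2 - (real_of_int (\<eta> k) - real_of_int (\<eta> m))^2)
     - lam * ((real_of_int b)^2 - (real_of_int (\<eta> k))^2) - h * (real_of_int b - real_of_int (\<eta> k))"
proof -
  define g where "g i = real_of_int (\<eta> i)" for i
  define c where "c = real_of_int b"
  have upd: "(\<lambda>i. real_of_int ((\<eta>(k:=b)) i)) = g(k:=c)"
    by (auto simp: g_def c_def)
  have Ham_eq: "Ham L J lam h \<zeta> =
       J / 2 * (\<Sum>i\<in>box L. \<Sum>j\<in>box L \<inter> nbrs i. (f i - f j)^2)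
     + J * (\<Sum>i\<in>inner_boundary L. \<Sum>j\<in>nbrs i - box L. (f i)^2)
     - lam * (\<Sum>i\<in>box L. (f i)^2) - h * (\<Sum>i\<in>box L. f i)"
    if "(\<lambda>i. real_of_int (\<zeta> i)) = f" for \<zeta> f
    using that by (auto simp: Ham_def)
  have bonds: "(\<Sum>i\<in>box L. \<Sum>j\<in>box L \<inter> nbrs i. ((g(k:=c)) i - (g(k:=c)) j)^2)
       - (\<Sum>i\<in>box L. \<Sum>j\<in>box L \<inter> nbrs i. (g i - g j)^2)
       = 2 * (\<Sum>m\<in>box L \<inter> nbrs k. (c - g m)^2 - (g k - g m)^2)"
    by (rule sum_sum_sq_diff_fun_upd[OF finite_box kb]) (auto simp: nbrs_def nn_sym nn_irrefl)
  have outside: "(\<Sum>m\<in>nbrs k. (c - g m)^2 - (g k - g m)^2)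
      = (\<Sum>m\<in>box L \<inter> nbrs k. (c - g m)^2 - (g k - g m)^2) + (\<Sum>m\<in>nbrs k - box L. c^2 - (g k)^2)"
    using sum_nbrs_split_box[OF cf, of "\<lambda>x. (c - x)^2 - (g k - x)^2" k] by (simp add: g_def)
  have g_eq: "(\<lambda>i. real_of_int (\<eta> i)) = g"
    by (simp add: g_def fun_eq_iff)
  have "Ham L J lam h (\<eta>(k:=b)) - Ham L J lam h \<eta>
     = J / 2 * ((\<Sum>i\<in>box L. \<Sum>j\<in>box L \<inter> nbrs i. ((g(k:=c)) i - (g(k:=c)) j)^2)
              - (\<Sum>i\<in>box L. \<Sum>j\<in>box L \<inter> nbrs i. (g i - g j)^2))
     + J * ((\<Sum>i\<in>inner_boundary L. \<Sum>j\<in>nbrs i - box L. ((g(k:=c)) i)^2)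
          - (\<Sum>i\<in>inner_boundary L. \<Sum>j\<in>nbrs i - box L. (g i)^2))
     - lam * ((\<Sum>i\<in>box L. ((g(k:=c)) i)^2) - (\<Sum>i\<in>box L. (g i)^2))
     - h * ((\<Sum>i\<in>box L. (g(k:=c)) i) - (\<Sum>i\<in>box L. g i))"
    unfolding Ham_eq[OF upd] Ham_eq[OF g_eq] by (simp add: algebra_simps)
  also have "\<dots> = J * (\<Sum>m\<in>box L \<inter> nbrs k. (c - g m)^2 - (g k - g m)^2)
     + J * (\<Sum>m\<in>nbrs k - box L. c^2 - (g k)^2) - lam * (c^2 - (g k)^2) - h * (c - g k)"
    unfolding bonds sum_inner_boundary_fun_upd[OF kb, of "\<lambda>x. x^2" g c]
      sum_fun_upd_diff[OF finite_box kb, of "\<lambda>_ x. x^2" g c]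
      sum_fun_upd_diff[OF finite_box kb, of "\<lambda>_ x. x" g c]
    by simp
  also have "\<dots> = J * (\<Sum>m\<in>nbrs k. (c - g m)^2 - (g k - g m)^2) - lam * (c^2 - (g k)^2) - h * (c - g k)"
    unfolding outside by (simp add: algebra_simps)
  finally show ?thesis by (simp add: g_def c_def)
qed

lemma sum_le_card_minus_six:
  fixes f :: "'a \<Rightarrow> real"
  assumes "finite S" and "j \<in> S" and "p \<in> S" and "j \<noteq> p"
    and "\<forall>m\<in>S. f m \<le> 1" and "f j \<le> -3" and "f p \<le> -1"
  shows "sum f S \<le> real (card S) - 6"
proof -
  have "sum f S = f j + sum f (S - {j})"
    using assms(1,2) by (rule sum.remove)
  also have "sum f (S - {j}) = f p + sum f (S - {j} - {p})"
    using assms(1,3,4) by (intro sum.remove) auto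
  also have "S - {j} - {p} = S - {j, p}" by auto
  also have "sum f (S - {j, p}) \<le> real (card (S - {j, p})) * 1"
    using assms(5) by (intro sum_bounded_above) auto
  also have "card (S - {j, p}) = card S - 2"
    using assms(1-4) by (simp add: card_Diff_subset)
  finally show ?thesis
    using assms(2-7) card_mono[OF assms(1), of "{j, p}"] by (simp add: of_nat_diff)
qed

text \<open>For a spin \<open>s = \<plusminus>1\<close> at \<open>k\<close>, each neighbour \<open>m\<close> contributes \<open>2 s \<eta> m - 1\<close> to the bond energy
  change of setting \<open>\<eta> k\<close> to 0.\<close>
lemma Ham_zero_flip_le:
  fixes s :: int
  assumes cf: "\<eta> \<in> configs L" and kb: "k \<in> box L" and s: "s \<in> {-1, 1}" and ek: "\<eta> k = s"
    and j: "j \<in> nbrs k" "\<eta> j = - s" and p: "p \<in> nbrs k" "p \<noteq> j" "\<eta> p \<noteq> s" and J: "0 \<le> J"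
  shows "Ham L J lam h (\<eta>(k:=0)) - Ham L J lam h \<eta> \<le> - 2 * J + lam + real_of_int s * h"
proof -
  define f where "f m = (0 - real_of_int (\<eta> m))^2 - (real_of_int (\<eta> k) - real_of_int (\<eta> m))^2" for m
  have "sum f (nbrs k) \<le> real (card (nbrs k)) - 6"
  proof (rule sum_le_card_minus_six[OF finite_nbrs j(1) p(1) p(2)[symmetric]])
    show "\<forall>m\<in>nbrs k. f m \<le> 1"
    proof
      fix m
      show "f m \<le> 1" using configs_range[OF cf, of m] s ek by (auto simp: f_def)
    qed
    show "f j \<le> -3" and "f p \<le> -1"
      using configs_range[OF cf, of p] s ek j(2) p(3) by (auto simp: f_def)
  qed
  then have "J * sum f (nbrs k) \<le> J * (-2)"
    using J by (intro mult_left_mono) (simp_all add: card_nbrs)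
  moreover have "(real_of_int s)^2 = 1" using s by auto
  ultimately show ?thesis
    using Ham_fun_upd[OF cf kb, of J lam h 0] ek by (simp add: f_def)
qed

lemma nn_translate:
  assumes "nn i j"
  obtains i' j' where "i' \<in> nbrs i" "i' \<noteq> j" "j' \<in> nbrs j" "j' \<noteq> i" "nn i' j'"
    and "fst i' + snd i' = fst i + snd i + 1"
proof -
  obtain a b c e where ij: "i = (a, b)" "j = (c, e)" by fastforce
  show ?thesis
  proof (cases "a = c")
    case True
    with assms ij show ?thesis
      by (intro that[of "(a + 1, b)" "(c + 1, e)"]) (auto simp: nbrs_def nn_def)
  next
    case False
    with assms ij show ?thesis
      by (intro that[of "(a, b + 1)" "(c, e + 1)"]) (auto simp: nbrs_def nn_def)
  qed
qed

lemma exists_zero_flip_lowering_Ham: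
  assumes cf: "\<eta> \<in> configs L"
    and pair: "\<exists>i\<in>box L. \<exists>j\<in>box L. nn i j \<and> \<eta> i = 1 \<and> \<eta> j = -1"
    and J: "0 \<le> J" and h: "0 \<le> h" and lam: "lam + h < 2 * J"
  shows "\<exists>k\<in>box L. \<eta> k \<noteq> 0 \<and> Ham L J lam h (\<eta>(k:=0)) < Ham L J lam h \<eta>"
proof -
  define Q where "Q = {(i, j). i \<in> box L \<and> j \<in> box L \<and> nn i j \<and> \<eta> i = 1 \<and> \<eta> j = -1}"
  define \<phi> :: "site \<times> site \<Rightarrow> int" where "\<phi> = (\<lambda>(i, j). fst i + snd i)"
  have fin: "finite Q"
    by (rule finite_subset[of _ "box L \<times> box L"]) (auto simp: Q_def finite_box)
  moreover have "Q \<noteq> {}" using pair by (auto simp: Q_def)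
  ultimately have "Max (\<phi> ` Q) \<in> \<phi> ` Q" by simp
  then obtain i j where ij: "(i, j) \<in> Q" and max: "\<phi> (i, j) = Max (\<phi> ` Q)" by auto
  have extremal: "\<phi> q \<le> \<phi> (i, j)" if "q \<in> Q" for q
    unfolding max using fin that by simp
  from ij have ib: "i \<in> box L" and jb: "j \<in> box L" and nij: "nn i j" and ei: "\<eta> i = 1" and ej: "\<eta> j = -1"
    by (auto simp: Q_def)
  obtain i' j' where i': "i' \<in> nbrs i" "i' \<noteq> j" and j': "j' \<in> nbrs j" "j' \<noteq> i"
    and nij': "nn i' j'" and up: "fst i' + snd i' = fst i + snd i + 1"
    using nn_translate[OF nij] by blast
  have "\<not> (\<eta> i' = 1 \<and> \<eta> j' = -1)"
  proof
    assume spins: "\<eta> i' = 1 \<and> \<eta> j' = -1"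
    then have "i' \<in> box L" and "j' \<in> box L"
      using configs_outside[OF cf] by fastforce+
    with spins nij' have "(i', j') \<in> Q" by (simp add: Q_def)
    then show False using extremal[of "(i', j')"] up by (simp add: \<phi>_def)
  qed
  then consider "\<eta> i' \<noteq> 1" | "\<eta> j' \<noteq> -1" by blast
  then show ?thesis
  proof cases
    case 1
    have "Ham L J lam h (\<eta>(i:=0)) - Ham L J lam h \<eta> \<le> - 2 * J + lam + h"
      using Ham_zero_flip_le[OF cf ib _ ei _ _ i' _ J, where lam = lam and h = h] nij ej 1 by (simp add: nbrs_def)
    then show ?thesis using ib ei lam by (intro bexI[of _ i]) auto
  next
    case 2
    have "Ham L J lam h (\<eta>(j:=0)) - Ham L J lam h \<eta> \<le> - 2 * J + lam - h"
      using Ham_zero_flip_le[OF cf jb _ ej _ _ j' _ J, where lam = lam and h = h] nij ei 2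
      by (simp add: nbrs_def nn_sym)
    then show ?thesis using jb ej lam h by (intro bexI[of _ j]) auto
  qed
qed

lemma is_path_single_flip:
  assumes "\<eta> \<in> configs L" and "k \<in> box L" and "b \<in> {-1, 0, 1}" and "b \<noteq> \<eta> k"
  shows "is_path L [\<eta>, \<eta>(k:=b)]"
proof -
  have "\<exists>!i. \<eta> i \<noteq> (\<eta>(k:=b)) i"
    using assms(4) by (intro ex1I[of _ k]) (auto split: if_splits)
  then show ?thesis
    using assms configs_fun_upd by (auto simp: is_path_def less_Suc_eq)
qed

lemma downhill_Ham_le_hd:
  assumes "downhill L J lam h p" and "\<zeta> \<in> set p"
  shows "Ham L J lam h \<zeta> \<le> Ham L J lam h (hd p)"
proof -
  have "Ham L J lam h (p ! n) \<le> Ham L J lam h (p ! 0)" if "n < length p" for n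
    using that
  proof (induction n)
    case (Suc n)
    then have "Ham L J lam h (p ! Suc n) \<le> Ham L J lam h (p ! n)"
      using assms(1) by (simp add: downhill_def)
    with Suc show ?case by simp
  qed simp
  moreover obtain n where "n < length p" and "\<zeta> = p ! n"
    using assms(2) by (auto simp: in_set_conv_nth)
  moreover have "hd p = p ! 0"
    using assms(2) by (intro hd_conv_nth) auto
  ultimately show ?thesis by simp
qed

lemma Phi_eq_Ham_if_path_below:
  assumes "is_path L p" and "hd p = \<eta>" and "last p \<in> A"
    and below: "\<forall>\<zeta>\<in>set p. Ham L J lam h \<zeta> \<le> Ham L J lam h \<eta>"
  shows "Phi L J lam h \<eta> A = Ham L J lam h \<eta>"
proof -
  define S where "S = {Max (Ham L J lam h ` set q) | q. is_path L q \<and> hd q = \<eta> \<and> last q \<in> A}"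
  have start: "\<eta> \<in> set q" if "is_path L q" "hd q = \<eta>" for q
    using that by (auto simp: is_path_def)
  have "Max (Ham L J lam h ` set p) = Ham L J lam h \<eta>"
    using assms(1,2) below start by (intro Max_eqI) auto
  then have "Ham L J lam h \<eta> \<in> S"
    unfolding S_def using assms(1-3) by (intro CollectI exI[of _ p]) simp
  moreover have "Ham L J lam h \<eta> \<le> x" if "x \<in> S" for x
    using that start unfolding S_def by auto
  ultimately show ?thesis
    unfolding Phi_def S_def[symmetric] by (rule cInf_eq_minimum)
qed

lemma stab_eq_0_if_downhill:
  assumes "is_path L p" and "hd p = \<eta>" and "downhill L J lam h p"
    and "Ham L J lam h (last p) < Ham L J lam h \<eta>"
  shows "stab L J lam h \<eta> = 0"
proof -
  have "last p \<in> configs L"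
    using assms(1) by (auto simp: is_path_def)
  then have "Phi L J lam h \<eta> {\<zeta> \<in> configs L. Ham L J lam h \<zeta> < Ham L J lam h \<eta>} = Ham L J lam h \<eta>"
    using assms downhill_Ham_le_hd by (intro Phi_eq_Ham_if_path_below) auto
  then show ?thesis by (simp add: stab_def)
qed

theorem lemma4p1:
  fixes lam h :: real
  assumes "0 < h" and "lam / 2 < h" and "h < lam"
  shows "\<exists>J0. \<forall>(J::real) (L::nat) \<eta>.
    J \<ge> J0 \<longrightarrow>
    real L > (2 * J / (lam - h)) ^ 3 \<longrightarrow>
    2 * J / (lam + h) \<notin> \<int> \<longrightarrow> 2 * J / (lam - h) \<notin> \<int> \<longrightarrow>
    (2 * J + lam - h) / (lam + h) \<notin> \<int> \<longrightarrow> (J + lam + h) / h \<notin> \<int> \<longrightarrow>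
    \<eta> \<in> configs L \<longrightarrow>
    (\<exists>i\<in>box L. \<exists>j\<in>box L. nn i j \<and> \<eta> i = 1 \<and> \<eta> j = -1) \<longrightarrow>
    (\<exists>p. is_path L p \<and> hd p = \<eta> \<and> downhill L J lam h p \<and>
         Ham L J lam h (last p) < Ham L J lam h \<eta>)
    \<and> stab L J lam h \<eta> = 0"
proof (intro exI[of _ "lam + h"] allI impI)
  fix J :: real and L :: nat and \<eta> :: config
  assume J: "lam + h \<le> J" and cf: "\<eta> \<in> configs L"
    and pair: "\<exists>i\<in>box L. \<exists>j\<in>box L. nn i j \<and> \<eta> i = 1 \<and> \<eta> j = -1"
  have "0 \<le> J" and "0 \<le> h" and "lam + h < 2 * J"
    using J assms(1,3) by linarith+
  then obtain k where kb: "k \<in> box L" and ek: "\<eta> k \<noteq> 0"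
    and lower: "Ham L J lam h (\<eta>(k:=0)) < Ham L J lam h \<eta>"
    using exists_zero_flip_lowering_Ham[OF cf pair] by blast
  define p where "p = [\<eta>, \<eta>(k:=0)]"
  have path: "is_path L p"
    unfolding p_def using cf kb ek by (intro is_path_single_flip) auto
  moreover have "downhill L J lam h p"
    using lower by (simp add: p_def downhill_def less_Suc_eq)
  moreover have "Ham L J lam h (last p) < Ham L J lam h \<eta>"
    using lower by (simp add: p_def)
  moreover have "hd p = \<eta>"
    by (simp add: p_def)
  ultimately show "(\<exists>p. is_path L p \<and> hd p = \<eta> \<and> downhill L J lam h p
      \<and> Ham L J lam h (last p) < Ham L J lam h \<eta>) \<and> stab L J lam h \<eta> = 0"
    using stab_eq_0_if_downhill by blast
qed

end
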